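(* Let $k\ge 4$ be an integer and let $\alpha_1,\ldots,\alpha_k$ be the (complex) roots of $f_k(X)=X^k-X^{k-1}-\cdots-X-1$. Then $$|\alpha_i-\alpha_j|>\frac{1}{k^{6.6}\,(\pi/e)^{k}}\qquad\text{for all }1\le i<j\le k.$$
   Context: $f_k(X)=X^k-X^{k-1}-\cdots-X-1$ is the characteristic polynomial of the $k$-generalized Fibonacci sequence; its roots are distinct. *)

theory Defs
  imports "HOL-Analysis.Analysis" "HOL-Computational_Algebra.Polynomial"
begin

definition fib_char_poly :: "nat \<Rightarrow> complex poly" where
  "fib_char_poly k = monom 1 k - (\<Sum>i<k. monom 1 i)"

end

theory Submission
  imports Defs
begin

text \<open>Every root of f_k is a root of the trinomial g(z) = (z - 1) f_k(z) = z^(k+1) - 2 z^k + 1,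
  whose derivative is z^(k-1) ((k+1) z - 2k). For distinct roots a, b with |b| \<le> |a| < 2,
  subtracting g(a) = g(b) = 0 and dividing by a - b writes a^(k-1) ((k+1) a - 2k) as (b - a) times
  a divided difference of size O(k^2 |a|^(k-2)); so |a - b| is bounded below by |g'(a)| up to
  polynomial factors. The factor (k+1) a - 2k = (k+1) (a - c) stays away from zero because at the
  critical point c = 2k/(k+1) the value |g(c)| is of order 2^k/k^2, while g is (2k+1) 2^k-Lipschitz
  on the disc of radius 2. Altogether |a - b| \<ge> k^-6, which beats the stated bound as \<pi> > e.\<close>

definition pow_diff_quot :: "nat \<Rightarrow> 'a \<Rightarrow> 'a \<Rightarrow> 'a::comm_ring_1" where
  "pow_diff_quot n u v = (\<Sum>j\<le>n. u^j * v^(n-j))"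

lemma power_Suc_diff_eq_pow_diff_quot:
  "u^(Suc n) - v^(Suc n) = (u - v) * pow_diff_quot n u v"
  unfolding pow_diff_quot_def using diff_power_eq_sum[of u n v]
  by (simp add: lessThan_Suc_atMost)

lemma pow_diff_quot_diag: "pow_diff_quot n u u = of_nat (Suc n) * u^n"
proof -
  have "pow_diff_quot n u u = (\<Sum>j\<le>n. u^n)"
    unfolding pow_diff_quot_def by (rule sum.cong) (auto simp: power_add[symmetric])
  then show ?thesis by simp
qed

definition pow_diff_quot2 :: "nat \<Rightarrow> 'a \<Rightarrow> 'a \<Rightarrow> 'a::comm_ring_1" where
  "pow_diff_quot2 n a b = (\<Sum>j<n. a^j * pow_diff_quot (n-1-j) b a)"

lemma pow_diff_quot_expand:
  "pow_diff_quot n a b = of_nat (Suc n) * a^n + (b - a) * pow_diff_quot2 n a b"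
proof -
  have "pow_diff_quot n a b - pow_diff_quot n a a = (\<Sum>j\<le>n. a^j * (b^(n-j) - a^(n-j)))"
    unfolding pow_diff_quot_def by (simp add: sum_subtractf[symmetric] algebra_simps)
  also have "\<dots> = (\<Sum>j<n. a^j * (b^(n-j) - a^(n-j)))"
    by (simp add: lessThan_Suc_atMost[symmetric])
  also have "\<dots> = (\<Sum>j<n. (b - a) * (a^j * pow_diff_quot (n-1-j) b a))"
  proof (rule sum.cong)
    fix j assume "j \<in> {..<n}"
    then have "n - j = Suc (n-1-j)" by auto
    then show "a^j * (b^(n-j) - a^(n-j)) = (b - a) * (a^j * pow_diff_quot (n-1-j) b a)"
      using power_Suc_diff_eq_pow_diff_quot[of b "n-1-j" a] by simp
  qed simp
  finally show ?thesis
    by (simp add: pow_diff_quot2_def pow_diff_quot_diag sum_distrib_left algebra_simps)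
qed

lemma norm_pow_diff_quot_le:
  fixes u v :: "'a::real_normed_field"
  assumes "norm u \<le> M" "norm v \<le> M"
  shows "norm (pow_diff_quot n u v) \<le> real (Suc n) * M^n"
proof -
  have M: "0 \<le> M" using assms(1) norm_ge_zero order_trans by blast
  have "norm (pow_diff_quot n u v) \<le> (\<Sum>j\<le>n. norm u ^ j * norm v ^ (n-j))"
    unfolding pow_diff_quot_def by (rule norm_sum[THEN order_trans]) (simp add: norm_mult norm_power)
  also have "\<dots> \<le> (\<Sum>j\<le>n. M^j * M^(n-j))"
    by (intro sum_mono mult_mono power_mono assms) (auto simp: M)
  also have "\<dots> = (\<Sum>j\<le>n. M^n)"
    by (rule sum.cong) (auto simp: power_add[symmetric])
  finally show ?thesis by simp
qed

lemma sum_lessThan_diff_real: "(\<Sum>j<n. real (n - j)) = real n * (real n + 1) / 2"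
proof (induction n)
  case (Suc n)
  have "(\<Sum>j<Suc n. real (Suc n - j)) = (\<Sum>j<n. real (n - j)) + real n + 1"
    by (simp add: sum.distrib Suc_diff_le of_nat_diff)
  then show ?case using Suc by (simp add: field_simps)
qed simp

lemma norm_pow_diff_quot2_le:
  fixes a b :: "'a::real_normed_field"
  assumes "norm b \<le> norm a"
  shows "norm (pow_diff_quot2 n a b) \<le> norm a^(n-1) * (real n * (real n + 1) / 2)"
proof -
  have "norm (pow_diff_quot2 n a b) \<le> (\<Sum>j<n. norm a ^ j * norm (pow_diff_quot (n-1-j) b a))"
    unfolding pow_diff_quot2_def
    by (rule norm_sum[THEN order_trans]) (simp add: norm_mult norm_power)
  also have "\<dots> \<le> (\<Sum>j<n. norm a ^ j * (real (Suc (n-1-j)) * norm a ^ (n-1-j)))"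
    by (intro sum_mono mult_left_mono norm_pow_diff_quot_le assms) auto
  also have "\<dots> = (\<Sum>j<n. norm a^(n-1) * real (n - j))"
    by (rule sum.cong) (auto simp: power_add[symmetric] Suc_diff_Suc)
  also have "\<dots> = norm a^(n-1) * (real n * (real n + 1) / 2)"
    by (subst sum_distrib_left[symmetric]) (simp only: sum_lessThan_diff_real)
  finally show ?thesis .
qed

lemma norm_trinomial_diff_le:
  fixes u v :: "'a::real_normed_field"
  assumes "norm u \<le> 2" "norm v \<le> 2" "k \<ge> 1"
  shows "norm ((u^(Suc k) - 2 * u^k) - (v^(Suc k) - 2 * v^k)) \<le> norm (u - v) * ((2 * real k + 1) * 2^k)"
proof -
  obtain m where k: "k = Suc m" using assms(3) by (cases k) auto
  have "(u^(Suc k) - 2 * u^k) - (v^(Suc k) - 2 * v^k)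
      = (u^(Suc k) - v^(Suc k)) - 2 * (u^(Suc m) - v^(Suc m))"
    unfolding k by (simp add: algebra_simps)
  also have "\<dots> = (u - v) * (pow_diff_quot k u v - 2 * pow_diff_quot m u v)"
    by (simp only: power_Suc_diff_eq_pow_diff_quot) (simp add: algebra_simps)
  finally have "(u^(Suc k) - 2 * u^k) - (v^(Suc k) - 2 * v^k)
      = (u - v) * (pow_diff_quot k u v - 2 * pow_diff_quot m u v)" .
  moreover have "norm (pow_diff_quot k u v - 2 * pow_diff_quot m u v)
      \<le> real (Suc k) * 2^k + 2 * (real (Suc m) * 2^m)"
    using norm_pow_diff_quot_le[OF assms(1,2), of k] norm_pow_diff_quot_le[OF assms(1,2), of m]
    by (intro norm_triangle_ineq4[THEN order_trans]) (simp add: norm_mult)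
  moreover have "real (Suc k) * 2^k + 2 * (real (Suc m) * 2^m) = (2 * real k + 1) * 2^k"
    unfolding k by (simp add: algebra_simps)
  ultimately show ?thesis
    by (simp add: norm_mult mult_left_mono)
qed

lemma four_le_imp_square_le_power2: "k \<ge> 4 \<Longrightarrow> 32 * (k+1)^2 \<le> 25 * 2^(k+1::nat)"
proof (induction k rule: dec_induct)
  case (step n)
  have "4*4 \<le> n*n" using step(1) by (intro mult_le_mono) auto
  then have "32 * (Suc n + 1)^2 \<le> 2 * (32 * (n+1)^2)" by (simp add: power2_eq_square)
  also have "\<dots> \<le> 2 * (25 * 2^(n+1))" using step(3) by simp
  finally show ?case by simp
qed simp

lemma trinomial_critical_value_ge:
  fixes c :: real
  assumes k: "k \<ge> 4" and c: "c = 2 * real k / (real k + 1)"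
  shows "7 * 2^k / (16 * (real k + 1)^2) \<le> \<bar>c^(Suc k) - 2 * c^k + 1\<bar>"
proof -
  have "1 / (real k + 1) \<le> (1 - 1 / (real k + 1))^k"
    using Bernoulli_inequality[of "- 1 / (real k + 1)" k] by (simp add: field_simps)
  then have "2^k * (1 / (real k + 1)) \<le> 2^k * (1 - 1 / (real k + 1))^k"
    by (rule mult_left_mono) simp
  also have "\<dots> = c^k"
    unfolding c power_mult_distrib[symmetric] by (simp add: field_simps)
  finally have ck: "2^k / (real k + 1) \<le> c^k" by simp
  define y where "y = 2 * c^k / (real k + 1)"
  have "2 * (2^k / (real k + 1)) / (real k + 1) \<le> y"
    unfolding y_def by (intro divide_right_mono mult_left_mono ck) auto
  then have y_ge: "2^(k+1) / (real k + 1)^2 \<le> y"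
    by (simp add: power2_eq_square)
  have "real (32 * (k+1)^2) \<le> real (25 * 2^(k+1))"
    using four_le_imp_square_le_power2[OF k] by (simp only: of_nat_le_iff)
  then have "32/25 \<le> (2::real)^(k+1) / (real k + 1)^2"
    by (simp add: divide_simps add.commute)
  with y_ge have y1: "32/25 \<le> y" by linarith
  have "c^(Suc k) - 2 * c^k + 1 = c^k * (c - 2) + 1" by (simp add: algebra_simps)
  also have "\<dots> = 1 - y"
    unfolding y_def c by (simp add: field_simps)
  finally have "\<bar>c^(Suc k) - 2 * c^k + 1\<bar> = y - 1" using y1 by simp
  moreover have "7 * 2^k / (16 * (real k + 1)^2) = 7/32 * (2^(k+1) / (real k + 1)^2)"
    by simp
  ultimately show ?thesis using y1 y_ge by linarith
qed

lemma poly_fib_char_poly: "poly (fib_char_poly k) z = z^k - (\<Sum>i<k. z^i)"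
  by (simp add: fib_char_poly_def poly_sum poly_monom)

lemma fib_root_imp_trinomial_root:
  assumes "poly (fib_char_poly k) z = 0"
  shows "z^(Suc k) - 2 * z^k + 1 = 0"
proof -
  have "z^(Suc k) - 2 * z^k + 1 = (z - 1) * z^k - (z^k - 1)" by (simp add: algebra_simps)
  also have "\<dots> = (z - 1) * poly (fib_char_poly k) z"
    by (simp add: poly_fib_char_poly power_diff_1_eq right_diff_distrib)
  finally show ?thesis using assms by simp
qed

lemma norm_fib_root_less_2:
  assumes "poly (fib_char_poly k) z = 0"
  shows "cmod z < 2"
proof (rule ccontr)
  assume "\<not> cmod z < 2"
  then have "1 \<le> cmod z - 1" by simp
  have "cmod z ^ k = cmod (\<Sum>i<k. z^i)"
    using assms by (simp add: poly_fib_char_poly flip: norm_power)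
  also have "\<dots> \<le> (\<Sum>i<k. cmod z ^ i)"
    by (rule norm_sum[THEN order_trans]) (simp add: norm_power)
  also have "\<dots> \<le> (cmod z - 1) * (\<Sum>i<k. cmod z ^ i)"
    using mult_right_mono[OF \<open>1 \<le> cmod z - 1\<close>, of "\<Sum>i<k. cmod z ^ i"]
    by (simp add: sum_nonneg)
  also have "\<dots> = cmod z ^ k - 1" by (simp add: power_diff_1_eq)
  finally show False by simp
qed

lemma fib_root_critical_gap:
  assumes k: "k \<ge> 4" and a: "poly (fib_char_poly k) a = 0"
  shows "7 / (16 * (real k + 1) * (2 * real k + 1)) \<le> cmod (of_nat (Suc k) * a - 2 * of_nat k)"
proof -
  \<comment> \<open>the nonzero critical point of the trinomial\<close>
  define c where "c = 2 * real k / (real k + 1)"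
  have c2: "cmod (of_real c) \<le> 2" unfolding c_def norm_of_real by (simp add: field_simps)
  have "7 * 2^k / (16 * (real k + 1)^2) \<le> \<bar>c^(Suc k) - 2 * c^k + 1\<bar>"
    using trinomial_critical_value_ge[OF k c_def] .
  also have "\<dots> = cmod ((a^(Suc k) - 2 * a^k) - (of_real c^(Suc k) - 2 * of_real c^k))"
  proof -
    have "a^(Suc k) - 2 * a^k = -1"
      using fib_root_imp_trinomial_root[OF a] by (simp add: eq_neg_iff_add_eq_0)
    then have "(a^(Suc k) - 2 * a^k) - (of_real c^(Suc k) - 2 * of_real c^k)
        = - of_real (c^(Suc k) - 2 * c^k + 1)"
      by simp
    then show ?thesis by (simp only: norm_minus_cancel norm_of_real)
  qed
  also have "\<dots> \<le> cmod (a - of_real c) * ((2 * real k + 1) * 2^k)"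
    using norm_fib_root_less_2[OF a] c2 k by (intro norm_trinomial_diff_le) auto
  finally have "7 / (16 * (real k + 1) * (2 * real k + 1)) \<le> (real k + 1) * cmod (a - of_real c)"
    by (simp add: divide_simps power2_eq_square mult_ac)
  also have "\<dots> = cmod (of_nat (Suc k) * a - 2 * of_nat k)"
  proof -
    have "of_nat (Suc k) * a - 2 * of_nat k = of_real (real k + 1) * (a - of_real c)"
    proof -
      have "(real k + 1) * c = 2 * real k" unfolding c_def by simp
      then have "of_real (real k + 1) * of_real c = (2 * of_nat k :: complex)"
        by (metis of_real_mult of_real_of_nat_eq of_real_numeral)
      then show ?thesis by (simp add: algebra_simps)
    qed
    then show ?thesis by (simp only: norm_mult norm_of_real)
  qed
  finally show ?thesis .
qed

lemma norm_fib_root_ge_one_third: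
  assumes k: "k \<ge> 1" and a: "poly (fib_char_poly k) a = 0"
  shows "1/3 \<le> cmod a"
proof (cases "cmod a < 1")
  case True
  have "a^k * (a - 2) = -1" using fib_root_imp_trinomial_root[OF a] by (simp add: algebra_simps)
  then have "1 = cmod a ^ k * cmod (a - 2)" by (metis norm_minus_cancel norm_one norm_mult norm_power)
  also have "\<dots> \<le> cmod a ^ k * 3"
    using norm_triangle_ineq4[of a 2] True by (intro mult_left_mono) auto
  also have "\<dots> \<le> cmod a * 3"
    using power_decreasing[of 1 k "cmod a"] True k by simp
  finally show ?thesis by simp
qed simp

lemma fib_root_min_norm_gap:
  assumes k: "k \<ge> 4" and a: "poly (fib_char_poly k) a = 0"
  shows "7 / (16 * (real k + 1) * (2 * real k + 1))
    \<le> min 1 (cmod a) * cmod (of_nat (Suc k) * a - 2 * of_nat k)"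
proof (cases "cmod a < 1")
  case True
  have "2 * real k = cmod (of_nat (Suc k) * a - (of_nat (Suc k) * a - 2 * of_nat k))"
    by (simp add: norm_mult)
  also have "\<dots> \<le> (real k + 1) * cmod a + cmod (of_nat (Suc k) * a - 2 * of_nat k)"
    by (rule norm_triangle_ineq4[THEN order_trans]) (simp only: norm_mult norm_of_nat, simp add: add.commute)
  finally have "2 * real k \<le> (real k + 1) * cmod a + cmod (of_nat (Suc k) * a - 2 * of_nat k)" .
  moreover have "(real k + 1) * cmod a \<le> real k + 1"
    using True mult_left_mono[of "cmod a" 1 "real k + 1"] by simp
  ultimately have "3 \<le> cmod (of_nat (Suc k) * a - 2 * of_nat k)"
    using k by linarith
  then have "1/3 * 3 \<le> cmod a * cmod (of_nat (Suc k) * a - 2 * of_nat k)"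
    using norm_fib_root_ge_one_third[OF _ a] k by (intro mult_mono) auto
  then have "1 \<le> min 1 (cmod a) * cmod (of_nat (Suc k) * a - 2 * of_nat k)"
    using True by simp
  moreover have "7 / (16 * (real k + 1) * (2 * real k + 1)) \<le> 1"
    using mult_mono[of 16 "16 * (real k + 1)" 1 "2 * real k + 1"] by (simp add: divide_simps)
  ultimately show ?thesis by linarith
qed (use fib_root_critical_gap[OF k a] in simp)

lemma trinomial_roots_diff_eq:
  fixes a b :: "'a::idom"
  assumes ga: "a^(Suc k) - 2 * a^k + 1 = 0" and gb: "b^(Suc k) - 2 * b^k + 1 = 0"
    and ab: "a \<noteq> b" and k: "k = Suc m"
  shows "a^m * (of_nat (Suc k) * a - 2 * of_nat k)
    = (b - a) * (2 * pow_diff_quot2 m a b - pow_diff_quot2 k a b)"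
proof -
  have "0 = (a^(Suc k) - 2 * a^k + 1) - (b^(Suc k) - 2 * b^k + 1)" using ga gb by simp
  also have "\<dots> = (a^(Suc k) - b^(Suc k)) - 2 * (a^(Suc m) - b^(Suc m))"
    using k by (simp add: algebra_simps)
  also have "\<dots> = (a - b) * (pow_diff_quot k a b - 2 * pow_diff_quot m a b)"
    by (simp only: power_Suc_diff_eq_pow_diff_quot) (simp add: algebra_simps)
  finally have "pow_diff_quot k a b - 2 * pow_diff_quot m a b = 0" using ab by simp
  then have "of_nat (Suc k) * a^k + (b - a) * pow_diff_quot2 k a b
      - 2 * (of_nat (Suc m) * a^m + (b - a) * pow_diff_quot2 m a b) = 0"
    by (simp only: pow_diff_quot_expand)
  then show ?thesis using k by (simp add: algebra_simps)
qed

lemma fib_roots_norm_ineq: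
  assumes k: "k \<ge> 2"
    and a: "poly (fib_char_poly k) a = 0" and b: "poly (fib_char_poly k) b = 0"
    and ab: "a \<noteq> b" and ba: "cmod b \<le> cmod a"
  shows "cmod a * cmod (of_nat (Suc k) * a - 2 * of_nat k)
    \<le> cmod (a - b) * (real k * (real k - 1) + cmod a * (real k * (real k + 1) / 2))"
proof -
  define p where "p = k - 2"
  have k2: "k = Suc (Suc p)" using k unfolding p_def by simp
  define R where "R = cmod a"
  define d where "d = cmod (a - b)"
  define S2 where "S2 = pow_diff_quot2 (Suc p) a b"
  define S1 where "S1 = pow_diff_quot2 k a b"
  have "R > 0" using fib_root_imp_trinomial_root[OF a] k2 unfolding R_def by (cases "a = 0") auto
  have "R^(Suc p) * cmod (of_nat (Suc k) * a - 2 * of_nat k) = d * cmod (2 * S2 - S1)"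
    using arg_cong[OF trinomial_roots_diff_eq[OF fib_root_imp_trinomial_root[OF a]
          fib_root_imp_trinomial_root[OF b] ab k2], of cmod]
    unfolding R_def d_def S1_def S2_def
    by (simp add: norm_mult norm_power norm_minus_commute)
  also have "\<dots> \<le> d * (2 * cmod S2 + cmod S1)"
    unfolding d_def by (intro mult_left_mono norm_triangle_ineq4[THEN order_trans]) (auto simp: norm_mult)
  also have "\<dots> \<le> d * (2 * (R^p * (real (Suc p) * (real (Suc p) + 1) / 2))
      + R^(Suc p) * (real k * (real k + 1) / 2))"
    unfolding d_def R_def S1_def S2_def
    using norm_pow_diff_quot2_le[OF ba, of "Suc p"] norm_pow_diff_quot2_le[OF ba, of k] k2
    by (intro mult_left_mono add_mono) auto
  also have "\<dots> = R^p * (d * (real k * (real k - 1) + R * (real k * (real k + 1) / 2)))"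
    unfolding k2 by (simp add: field_simps)
  finally show ?thesis
    using \<open>R > 0\<close> unfolding R_def d_def by (simp add: mult_le_cancel_left)
qed

lemma fib_roots_min_norm_ineq:
  assumes k: "k \<ge> 2"
    and a: "poly (fib_char_poly k) a = 0" and b: "poly (fib_char_poly k) b = 0"
    and ab: "a \<noteq> b" and ba: "cmod b \<le> cmod a"
  shows "min 1 (cmod a) * cmod (of_nat (Suc k) * a - 2 * of_nat k)
    \<le> cmod (a - b) * (real k * (3 * real k - 1) / 2)"
proof -
  define R where "R = cmod a"
  define x where "x = cmod (of_nat (Suc k) * a - 2 * of_nat k)"
  define d where "d = cmod (a - b)"
  have main: "R * x \<le> d * (real k * (real k - 1) + R * (real k * (real k + 1) / 2))"
    using fib_roots_norm_ineq[OF assms] unfolding R_def x_def d_def .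
  have Q: "real k * (real k - 1) + real k * (real k + 1) / 2 = real k * (3 * real k - 1) / 2"
    by (simp add: field_simps)
  have "0 \<le> d" "1 \<le> real k" using k unfolding d_def by auto
  show ?thesis
  proof (cases "R \<ge> 1")
    case True
    have "real k * (real k - 1) \<le> R * (real k * (real k - 1))"
      using mult_right_mono[OF True, of "real k * (real k - 1)"] \<open>1 \<le> real k\<close> by simp
    then have "R * x \<le> d * (R * (real k * (real k - 1)) + R * (real k * (real k + 1) / 2))"
      using main \<open>0 \<le> d\<close> by (meson add_right_mono mult_left_mono order_trans)
    also have "\<dots> = R * (d * (real k * (3 * real k - 1) / 2))"
      unfolding Q[symmetric] by (simp add: algebra_simps)
    finally have "R * x \<le> R * (d * (real k * (3 * real k - 1) / 2))" .
    moreover have "0 < R" using True by simp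
    ultimately show ?thesis using True unfolding R_def x_def d_def by simp
  next
    case False
    have "R * (real k * (real k + 1) / 2) \<le> real k * (real k + 1) / 2"
      using mult_right_mono[of R 1 "real k * (real k + 1) / 2"] False by simp
    then have "R * x \<le> d * (real k * (real k - 1) + real k * (real k + 1) / 2)"
      using main \<open>0 \<le> d\<close> by (meson add_left_mono mult_left_mono order_trans)
    then show ?thesis using False unfolding Q R_def x_def d_def by simp
  qed
qed

lemma sextic_bound:
  fixes k :: real
  assumes k: "k \<ge> 4"
  shows "8 * (k + 1) * (2 * k + 1) * k * (3 * k - 1) \<le> 7 * k^6"
proof -
  have kk: "4 * k \<le> k * k" using k by (intro mult_right_mono) auto
  have "(k + 1) * (2 * k + 1) = 2 * (k * k) + 3 * k + 1" "k * (3 * k - 1) = 3 * (k * k) - k"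
    by (simp_all add: algebra_simps)
  then have le1: "(k + 1) * (2 * k + 1) \<le> 3 * (k * k)" and le2: "k * (3 * k - 1) \<le> 3 * (k * k)"
    and nonneg: "0 \<le> k * (3 * k - 1)"
    using kk k by linarith+
  have "8 * (k + 1) * (2 * k + 1) * k * (3 * k - 1) = 8 * ((k + 1) * (2 * k + 1)) * (k * (3 * k - 1))"
    by (simp add: algebra_simps)
  also have "\<dots> \<le> 8 * (3 * (k * k)) * (3 * (k * k))"
    using mult_mono[OF mult_left_mono[OF le1, of 8] le2 _ nonneg] by simp
  also have "\<dots> = 72 * (k * k) * (k * k)" by simp
  also have "\<dots> \<le> 7 * (k * k) * (k * k) * (k * k)"
  proof -
    have "72 \<le> 7 * (k * k)" using kk k by linarith
    then show ?thesis by (intro mult_right_mono) auto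
  qed
  also have "\<dots> = 7 * k^6" by (simp add: power_def numeral_eq_Suc algebra_simps)
  finally show ?thesis .
qed

lemma fib_roots_dist_ge_wlog:
  assumes k: "k \<ge> 4"
    and a: "poly (fib_char_poly k) a = 0" and b: "poly (fib_char_poly k) b = 0"
    and ab: "a \<noteq> b" and ba: "cmod b \<le> cmod a"
  shows "1 \<le> cmod (a - b) * real k ^ 6"
proof -
  have "7 / (16 * (real k + 1) * (2 * real k + 1)) \<le> cmod (a - b) * (real k * (3 * real k - 1) / 2)"
    using fib_root_min_norm_gap[OF k a] fib_roots_min_norm_ineq[OF _ a b ab ba] k
    by (auto intro: order_trans)
  moreover have "0 < 16 * (real k + 1) * (2 * real k + 1)" by simp
  ultimately have "7 \<le> cmod (a - b) * (real k * (3 * real k - 1) / 2) * (16 * (real k + 1) * (2 * real k + 1))"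
    by (simp only: pos_divide_le_eq)
  also have "\<dots> = cmod (a - b) * (8 * (real k + 1) * (2 * real k + 1) * real k * (3 * real k - 1))"
    by (simp add: field_simps)
  also have "\<dots> \<le> cmod (a - b) * (7 * real k ^ 6)"
    using k by (intro mult_left_mono sextic_bound) auto
  finally show ?thesis by simp
qed

theorem theorem2:
  fixes k :: nat and a b :: complex
  assumes "k \<ge> 4"
    and "poly (fib_char_poly k) a = 0"
    and "poly (fib_char_poly k) b = 0"
    and "a \<noteq> b"
  shows "cmod (a - b) > 1 / (real k powr 6.6 * (pi / exp 1) ^ k)"
proof -
  have dist: "1 \<le> cmod (a - b) * real k ^ 6"
  proof (cases "cmod b \<le> cmod a")
    case False
    then have "1 \<le> cmod (b - a) * real k ^ 6"
      using fib_roots_dist_ge_wlog[OF assms(1,3,2)] assms(4) by simp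
    then show ?thesis by (simp add: norm_minus_commute)
  qed (use fib_roots_dist_ge_wlog[OF assms] in simp)
  have k6: "0 < real k ^ 6" using assms(1) by simp
  have "real k powr 6 < real k powr 6.6"
    using assms(1) by (intro powr_less_mono) auto
  then have "real k ^ 6 < real k powr 6.6" by simp
  moreover have "1 \<le> (pi / exp 1) ^ k"
    using pi_gt3 exp_le by (intro one_le_power) simp
  ultimately have "real k ^ 6 * 1 < real k powr 6.6 * (pi / exp 1) ^ k"
    using k6 by (intro mult_less_le_imp_less) auto
  then have "1 / (real k powr 6.6 * (pi / exp 1) ^ k) < 1 / real k ^ 6"
    using k6 by (intro divide_strict_left_mono) auto
  also have "\<dots> \<le> cmod (a - b)" using dist k6 by (simp add: divide_simps mult.commute)
  finally show ?thesis .
qed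

end
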